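(* Let $r\ge 0$ and $n>r+1$ be integers, $m=n-r-1$, and let $\mathbf D=\mathbf D^{(r+1)}\in\mathbb R^{m\times n}$ be the $(r+1)$-th order difference matrix. Let $r_a=\lfloor (r+1)/2\rfloor$, $r_b=\lceil (r+1)/2\rceil-1$. Let $0=\tau_0<\tau_1<\dots<\tau_J<\tau_{J+1}=m$ be integers with $\tau_1-r_b\ge 1$, $\tau_J+r_a\le m$ and $\tau_{j+1}-\tau_j\ge r+1$ for all $j$; put $A_j=\{\tau_j-r_b,\dots,\tau_j+r_a\}$ for $j=1,\dots,J$ and $\mathcal A=\bigcup_{j=1}^J A_j\subseteq\{1,\dots,m\}$. Suppose $\mathbf y=\mathbf f+\boldsymbol\varepsilon$ with $\mathbf f\in\mathbb R^n$ deterministic satisfying $[\mathbf D\mathbf f]_i=0$ for every $i\in\{1,\dots,m\}\setminus\mathcal A$, and $\boldsymbol\varepsilon\sim N(\mathbf 0,\sigma^2\mathbf I_n)$. Let $\mathbf M=(\mathbf D_{-\mathcal A}\mathbf D_{-\mathcal A}^T)^{-1}\mathbf D_{-\mathcal A}$, whose rows (and the rows/columns of $(\mathbf D_{-\mathcal A}\mathbf D_{-\mathcal A}^T)^{-1}$) are labelled by the indices in $\{1,\dots,m\}\setminus\mathcal A$. For $j=0,\dots,J$ and $t\in[(\tau_j+r_a)/m,(\tau_{j+1}-r_b)/m]$ define $$W_j(t)=(\tau_{j+1}-\tau_j-r)^{-(2r+1)/2}\,[\mathbf M]_{\lfloor mt\rfloor}\,\mathbf y\quad\text{if }\tau_j+r_a<\lfloor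 mt\rfloor<\tau_{j+1}-r_b,$$ and $W_j(t)=0$ if $\lfloor mt\rfloor\in\{\tau_j+r_a,\tau_{j+1}-r_b\}$. Then: (a) for each $j$, the process $\mathbf W_j=\{W_j(t):(\tau_j+r_a)/m\le t\le(\tau_{j+1}-r_b)/m\}$ is a Gaussian bridge process (a Gaussian process vanishing at both endpoints of its interval) with mean zero and covariance $$\mathrm{Cov}(W_j(t),W_j(t'))=\sigma^2(\tau_{j+1}-\tau_j-r)^{-(2r+1)}\big[(\mathbf D_{-\mathcal A}\mathbf D_{-\mathcal A}^T)^{-1}\big]_{\lfloor mt\rfloor,\lfloor mt'\rfloor}$$ for $t,t'$ in the interval with $\lfloor mt\rfloor,\lfloor mt'\rfloor$ strictly between $\tau_j+r_a$ and $\tau_{j+1}-r_b$; (b) for $j\neq j'$, the processes $\mathbf W_j$ and $\mathbf W_{j'}$ are independent.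
   Context: The first-order difference matrix $\mathbf D^{(1)}\in\mathbb R^{(n-1)\times n}$ has $i$-th row with $-1$ in position $i$, $+1$ in position $i+1$, and zeros elsewhere. For $r\ge1$, $\mathbf D^{(r+1)}=\mathbf D^{(1)}\mathbf D^{(r)}$, where in this product $\mathbf D^{(1)}$ denotes the $(n-r-2)\times(n-r-1)$ first-difference matrix; thus $\mathbf D^{(r+1)}$ has $n-r-1$ rows. For an index set $\mathcal I$, $\mathbf D_{\mathcal I}$ is the submatrix of rows with labels in $\mathcal I$ and $\mathbf D_{-\mathcal I}$ the submatrix of the remaining rows; $[\mathbf M]_k$ denotes the row of $\mathbf M$ labelled $k$, and $[\cdot]_{k,l}$ the entry with labels $(k,l)$. *)

theory Defs
  imports "HOL-Probability.Probability"
begin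

(* Matrices are functions nat => nat => real with 1-based row/column labels;
   the dimensions are tracked explicitly. *)

definition diff1 :: "nat \<Rightarrow> nat \<Rightarrow> real" where
  "diff1 i l = (if l = i then -1 else if l = Suc i then 1 else 0)"

(* diffmat n k = D^(k) of size (n-k) x n; D^(k+1) = D^(1) D^(k), inner dimension n-k.
   diffmat n 0 is the n x n identity, so that diffmat n 1 = D^(1) on {1..n-1} x {1..n}. *)
fun diffmat :: "nat \<Rightarrow> nat \<Rightarrow> nat \<Rightarrow> nat \<Rightarrow> real" where
  "diffmat n 0 i l = (if i = l then 1 else 0)"
| "diffmat n (Suc k) i l = (\<Sum>p\<in>{1..n-k}. diff1 i p * diffmat n k p l)"

definition r_a :: "nat \<Rightarrow> nat" where
  "r_a r = nat \<lfloor>real (r + 1) / 2\<rfloor>"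

definition r_b :: "nat \<Rightarrow> nat" where
  "r_b r = nat \<lceil>real (r + 1) / 2\<rceil> - 1"

definition Aset :: "nat \<Rightarrow> nat \<Rightarrow> (nat \<Rightarrow> nat) \<Rightarrow> nat set" where
  "Aset r J \<tau> = (\<Union>j\<in>{1..J}. {\<tau> j - r_b r .. \<tau> j + r_a r})"

definition set_inv :: "nat set \<Rightarrow> (nat \<Rightarrow> nat \<Rightarrow> real) \<Rightarrow> nat \<Rightarrow> nat \<Rightarrow> real" where
  "set_inv S G = (SOME H. (\<forall>k\<in>S. \<forall>l\<in>S. (\<Sum>p\<in>S. G k p * H p l) = (if k = l then 1 else 0))
                        \<and> (\<forall>k\<in>S. \<forall>l\<in>S. (\<Sum>p\<in>S. H k p * G p l) = (if k = l then 1 else 0))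
                        \<and> (\<forall>k l. k \<notin> S \<or> l \<notin> S \<longrightarrow> H k l = 0))"

definition gram :: "nat \<Rightarrow> (nat \<Rightarrow> nat \<Rightarrow> real) \<Rightarrow> nat \<Rightarrow> nat \<Rightarrow> real" where
  "gram n D k l = (\<Sum>i\<in>{1..n}. D k i * D l i)"

definition Ginv :: "nat \<Rightarrow> nat \<Rightarrow> nat \<Rightarrow> (nat \<Rightarrow> nat) \<Rightarrow> nat \<Rightarrow> nat \<Rightarrow> real" where
  "Ginv n r J \<tau> = set_inv ({1..n - r - 1} - Aset r J \<tau>) (gram n (diffmat n (r + 1)))"

definition Mmat :: "nat \<Rightarrow> nat \<Rightarrow> nat \<Rightarrow> (nat \<Rightarrow> nat) \<Rightarrow> nat \<Rightarrow> nat \<Rightarrow> real" where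
  "Mmat n r J \<tau> k i =
     (\<Sum>p\<in>{1..n - r - 1} - Aset r J \<tau>. Ginv n r J \<tau> k p * diffmat n (r + 1) p i)"

definition Ival :: "nat \<Rightarrow> nat \<Rightarrow> (nat \<Rightarrow> nat) \<Rightarrow> nat \<Rightarrow> real set" where
  "Ival n r \<tau> j = {real (\<tau> j + r_a r) / real (n - r - 1) .. real (\<tau> (Suc j) - r_b r) / real (n - r - 1)}"

definition Wproc :: "nat \<Rightarrow> nat \<Rightarrow> nat \<Rightarrow> (nat \<Rightarrow> nat) \<Rightarrow> (nat \<Rightarrow> real) \<Rightarrow> ('a \<Rightarrow> nat \<Rightarrow> real)
                      \<Rightarrow> nat \<Rightarrow> real \<Rightarrow> 'a \<Rightarrow> real" where
  "Wproc n r J \<tau> f \<epsilon> j t \<omega> =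
     (let m = n - r - 1; k = nat \<lfloor>real m * t\<rfloor> in
      if \<tau> j + r_a r < k \<and> k < \<tau> (Suc j) - r_b r
      then real (\<tau> (Suc j) - \<tau> j - r) powr (- (2 * real r + 1) / 2)
           * (\<Sum>i\<in>{1..n}. Mmat n r J \<tau> k i * (f i + \<epsilon> \<omega> i))
      else 0)"

definition gaussian_rv :: "'a measure \<Rightarrow> ('a \<Rightarrow> real) \<Rightarrow> bool" where
  "gaussian_rv P X \<longleftrightarrow>
     (\<exists>\<mu> s. s > 0 \<and> distributed P lborel X (normal_density \<mu> s))
     \<or> (X \<in> borel_measurable P \<and> (\<exists>c. AE \<omega> in P. X \<omega> = c))"

(* Gaussian process on index set I: all finite linear combinations are Gaussian,
   i.e. all finite-dimensional distributions are (possibly degenerate) multivariate normal *)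
definition gaussian_process :: "'a measure \<Rightarrow> 'i set \<Rightarrow> ('i \<Rightarrow> 'a \<Rightarrow> real) \<Rightarrow> bool" where
  "gaussian_process P I X \<longleftrightarrow>
     (\<forall>t\<in>I. X t \<in> borel_measurable P) \<and>
     (\<forall>S c. finite S \<longrightarrow> S \<subseteq> I \<longrightarrow> gaussian_rv P (\<lambda>\<omega>. \<Sum>t\<in>S. c t * X t \<omega>))"

end

theory Submission
  imports Defs "Jordan_Normal_Form.Determinant"
begin

(* Under the null hypothesis D_{-A} f = 0 we have M y = M eps, so every W_j(t) is a fixed linear
   form in the i.i.d. N(0, sigma^2) noise: it is Gaussian with mean zero, and
   Cov(M eps) = sigma^2 M M^T = sigma^2 (D_{-A} D_{-A}^T)^{-1}.
   Row p of D^(r+1) is supported on {p..p+r+1}, and two rows of D_{-A} lying on different sides of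
   a change point are more than r+1 apart, because the removed block A_j has r+1 elements.
   Hence D_{-A} D_{-A}^T, and with it its inverse, is block diagonal along the segments, so the rows
   of M belonging to segment j only involve noise coordinates in a window attached to that segment.
   These windows are pairwise disjoint, which makes the processes W_j independent. *)

lemma diff1_sum:
  assumes "1 \<le> i" "Suc i \<le> N"
  shows "(\<Sum>p\<in>{1..N}. diff1 i p * g p) = g (Suc i) - g i"
proof -
  have "(\<Sum>p\<in>{1..N}. diff1 i p * g p)
      = (\<Sum>p\<in>{1..N}. if p = Suc i then g p else 0) - (\<Sum>p\<in>{1..N}. if p = i then g p else 0)"
    unfolding sum_subtractf[symmetric] by (intro sum.cong) (auto simp: diff1_def)
  also have "\<dots> = g (Suc i) - g i"
    using assms by (simp add: sum.delta)
  finally show ?thesis .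
qed

lemma diffmat_band:
  assumes "1 \<le> i" "i + k \<le> n"
  shows "(\<forall>l. l < i \<or> i + k < l \<longrightarrow> diffmat n k i l = 0) \<and> diffmat n k i (i + k) = 1"
  using assms
proof (induction k arbitrary: i)
  case 0
  then show ?case by auto
next
  case (Suc k)
  have step: "diffmat n (Suc k) i l = diffmat n k (Suc i) l - diffmat n k i l" for l
    using Suc.prems diff1_sum[of i "n - k" "\<lambda>p. diffmat n k p l"] by simp
  have "(\<forall>l. l < i \<or> i + k < l \<longrightarrow> diffmat n k i l = 0) \<and> diffmat n k i (i + k) = 1"
    using Suc by auto
  moreover have "(\<forall>l. l < Suc i \<or> Suc i + k < l \<longrightarrow> diffmat n k (Suc i) l = 0)
      \<and> diffmat n k (Suc i) (Suc i + k) = 1"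
    using Suc.IH[of "Suc i"] Suc.prems by auto
  ultimately show ?case
    unfolding step by auto
qed

(* Otherwise every simp call unfolds D^(r+1) = D^(Suc r) by one level. *)
declare diffmat.simps [simp del]

lemma mat_inverse_of_trivial_kernel:
  fixes A :: "real mat"
  assumes A: "A \<in> carrier_mat N N"
    and ker: "\<And>v. v \<in> carrier_vec N \<Longrightarrow> A *\<^sub>v v = 0\<^sub>v N \<Longrightarrow> v = 0\<^sub>v N"
  shows "\<exists>B\<in>carrier_mat N N. A * B = 1\<^sub>m N \<and> B * A = 1\<^sub>m N"
proof -
  have "det A \<noteq> 0"
    using det_0_iff_vec_prod_zero_field[OF A] ker by blast
  then have "A \<in> Units (ring_mat TYPE(real) N ())"
    by (rule det_non_zero_imp_unit[OF A])
  then show ?thesis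
    unfolding Units_def ring_mat_def by auto
qed

definition set_inverse :: "nat set \<Rightarrow> (nat \<Rightarrow> nat \<Rightarrow> real) \<Rightarrow> (nat \<Rightarrow> nat \<Rightarrow> real) \<Rightarrow> bool" where
  "set_inverse S G H \<longleftrightarrow>
     (\<forall>k\<in>S. \<forall>l\<in>S. (\<Sum>p\<in>S. G k p * H p l) = (if k = l then 1 else 0))
   \<and> (\<forall>k\<in>S. \<forall>l\<in>S. (\<Sum>p\<in>S. H k p * G p l) = (if k = l then 1 else 0))
   \<and> (\<forall>k l. k \<notin> S \<or> l \<notin> S \<longrightarrow> H k l = 0)"

lemma set_inv_eq_Eps: "set_inv S G = (SOME H. set_inverse S G H)"
  by (simp add: set_inv_def set_inverse_def)

lemma reindexed_mat_kernel_trivial: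
  assumes \<phi>: "bij_betw \<phi> {0..<N} S"
    and ker: "\<And>x. \<forall>k\<in>S. (\<Sum>l\<in>S. G k l * x l) = 0 \<Longrightarrow> \<forall>l\<in>S. x l = 0"
    and v: "v \<in> carrier_vec N" "mat N N (\<lambda>(a, b). G (\<phi> a) (\<phi> b)) *\<^sub>v v = 0\<^sub>v N"
  shows "v = 0\<^sub>v N"
proof -
  define \<psi> where "\<psi> = inv_into {0..<N} \<phi>"
  have \<psi>: "\<psi> k < N" "\<phi> (\<psi> k) = k" if "k \<in> S" for k
    using bij_betw_apply[OF bij_betw_inv_into[OF \<phi>] that] bij_betw_inv_into_right[OF \<phi> that]
    by (simp_all add: \<psi>_def)
  have \<phi>: "\<psi> (\<phi> a) = a" "\<phi> a \<in> S" if "a < N" for a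
    using bij_betw_inv_into_left[OF \<phi>] bij_betw_apply[OF \<phi>] that by (simp_all add: \<psi>_def)
  define x where "x l = (if l \<in> S then vec_index v (\<psi> l) else 0)" for l
  have "(\<Sum>l\<in>S. G k l * x l) = 0" if k: "k \<in> S" for k
  proof -
    have "(\<Sum>l\<in>S. G k l * x l) = (\<Sum>b\<in>{0..<N}. G k (\<phi> b) * vec_index v b)"
      using \<phi> by (simp add: sum.reindex_bij_betw[OF assms(1), symmetric] x_def)
    also have "\<dots> = vec_index (mat N N (\<lambda>(a, b). G (\<phi> a) (\<phi> b)) *\<^sub>v v) (\<psi> k)"
      using \<psi>[OF k] v(1) by (simp add: mult_mat_vec_def scalar_prod_def)
    also have "\<dots> = 0"
      using v(2) \<psi>[OF k] by simp
    finally show ?thesis .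
  qed
  then have "\<forall>l\<in>S. x l = 0"
    using ker by blast
  then have "\<forall>b<N. vec_index v b = 0"
    using \<phi> by (force simp: x_def)
  then show ?thesis
    using v(1) by (intro eq_vecI) auto
qed

lemma set_inverse_exists:
  assumes fin: "finite S"
    and ker: "\<And>x. \<forall>k\<in>S. (\<Sum>l\<in>S. G k l * x l) = 0 \<Longrightarrow> \<forall>l\<in>S. x l = 0"
  shows "\<exists>H. set_inverse S G H"
proof -
  obtain \<phi> where \<phi>: "bij_betw \<phi> {0..<card S} S"
    using ex_bij_betw_nat_finite[OF fin] by blast
  define N where "N = card S"
  define \<psi> where "\<psi> = inv_into {0..<N} \<phi>"
  have \<psi>: "\<psi> k < N" "\<phi> (\<psi> k) = k" if "k \<in> S" for k
    using bij_betw_apply[OF bij_betw_inv_into[OF \<phi>] that] bij_betw_inv_into_right[OF \<phi> that]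
    by (simp_all add: \<psi>_def N_def)
  define A where "A = mat N N (\<lambda>(a, b). G (\<phi> a) (\<phi> b))"
  have A: "A \<in> carrier_mat N N"
    by (simp add: A_def)
  obtain B where B: "B \<in> carrier_mat N N" "A * B = 1\<^sub>m N" "B * A = 1\<^sub>m N"
    using mat_inverse_of_trivial_kernel[OF A] reindexed_mat_kernel_trivial[OF \<phi> ker]
    unfolding A_def N_def by blast
  define H where "H k l = (if k \<in> S \<and> l \<in> S then B $$ (\<psi> k, \<psi> l) else 0)" for k l
  have reindex: "(\<Sum>p\<in>S. g p) = (\<Sum>b\<in>{0..<N}. g (\<phi> b))" for g :: "nat \<Rightarrow> real"
    using sum.reindex_bij_betw[OF \<phi>, of g] by (simp add: N_def)
  have \<psi>_\<phi>: "\<psi> (\<phi> a) = a" "\<phi> a \<in> S" if "a < N" for a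
    using bij_betw_inv_into_left[OF \<phi>] bij_betw_apply[OF \<phi>] that by (simp_all add: \<psi>_def N_def)
  have "(\<Sum>p\<in>S. G k p * H p l) = (A * B) $$ (\<psi> k, \<psi> l)"
    and "(\<Sum>p\<in>S. H k p * G p l) = (B * A) $$ (\<psi> k, \<psi> l)" if "k \<in> S" "l \<in> S" for k l
    unfolding reindex using that \<psi> \<psi>_\<phi> A B(1)
    by (auto simp: H_def A_def scalar_prod_def row_def col_def intro!: sum.cong)
  then have "set_inverse S G H"
    using B \<psi> by (auto simp: set_inverse_def H_def) (metis \<psi>(2))
  then show ?thesis
    by blast
qed

lemma set_inverse_set_inv:
  assumes "finite S" and "\<And>x. \<forall>k\<in>S. (\<Sum>l\<in>S. G k l * x l) = 0 \<Longrightarrow> \<forall>l\<in>S. x l = 0"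
  shows "set_inverse S G (set_inv S G)"
  unfolding set_inv_eq_Eps using set_inverse_exists[OF assms] by (rule someI_ex)

lemma set_inverse_block_diagonal:
  fixes b :: "nat \<Rightarrow> 'b"
  assumes fin: "finite S" and inv: "set_inverse S G H"
    and G_block: "\<And>k p. k \<in> S \<Longrightarrow> p \<in> S \<Longrightarrow> b k \<noteq> b p \<Longrightarrow> G k p = 0"
    and k: "k \<in> S" and l: "l \<in> S" and kl: "b k \<noteq> b l"
  shows "H k l = 0"
proof -
  \<comment> \<open>Cutting the off-block entries out of H leaves a right inverse of G, which must equal H.\<close>
  define H' where "H' p q = (if b p = b q then H p q else 0)" for p q
  have right_inverse: "(\<Sum>p\<in>S. G q p * H' p l) = (if q = l then 1 else 0)" if q: "q \<in> S" for q
  proof -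
    have "(\<Sum>p\<in>S. G q p * H' p l) = (if b q = b l then \<Sum>p\<in>S. G q p * H p l else 0)"
      using G_block[OF q] by (cases "b q = b l") (auto simp: H'_def intro!: sum.cong sum.neutral)
    also have "\<dots> = (if q = l then 1 else 0)"
      using inv q l by (auto simp: set_inverse_def)
    finally show ?thesis .
  qed
  have "H k l = (\<Sum>q\<in>S. if q = l then H k q else 0)"
    using fin l by simp
  also have "\<dots> = (\<Sum>q\<in>S. H k q * (\<Sum>p\<in>S. G q p * H' p l))"
    using right_inverse by (intro sum.cong) auto
  also have "\<dots> = (\<Sum>q\<in>S. \<Sum>p\<in>S. H k q * G q p * H' p l)"
    by (simp add: sum_distrib_left mult.assoc)
  also have "\<dots> = (\<Sum>p\<in>S. \<Sum>q\<in>S. H k q * G q p * H' p l)"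
    by (rule sum.swap)
  also have "\<dots> = (\<Sum>p\<in>S. (\<Sum>q\<in>S. H k q * G q p) * H' p l)"
    by (simp add: sum_distrib_right)
  also have "\<dots> = (\<Sum>p\<in>S. if k = p then H' p l else 0)"
    using inv k by (intro sum.cong) (simp_all add: set_inverse_def)
  also have "\<dots> = H' k l"
    using fin k by simp
  finally show ?thesis
    using kl by (simp add: H'_def)
qed

lemma gram_sym: "gram n D k l = gram n D l k"
  by (simp add: gram_def mult.commute)

lemma gram_eq_0_if_apart:
  assumes "\<And>i. k + c < i \<Longrightarrow> D k i = 0" and "\<And>i. i < l \<Longrightarrow> D l i = 0" and "k + c < l"
  shows "gram n D k l = 0"
  unfolding gram_def
proof (rule sum.neutral, rule ballI)
  fix i
  show "D k i * D l i = 0"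
    using assms by (cases "i < l") auto
qed

lemma gram_quadratic_form:
  "(\<Sum>i\<in>{1..n}. (\<Sum>k\<in>S. x k * D k i)\<^sup>2) = (\<Sum>k\<in>S. x k * (\<Sum>l\<in>S. gram n D k l * x l))"
proof -
  have "(\<Sum>i\<in>{1..n}. (\<Sum>k\<in>S. x k * D k i)\<^sup>2)
      = (\<Sum>i\<in>{1..n}. \<Sum>k\<in>S. \<Sum>l\<in>S. (x k * D k i) * (x l * D l i))"
    by (simp add: power2_eq_square sum_product)
  also have "\<dots> = (\<Sum>k\<in>S. \<Sum>i\<in>{1..n}. \<Sum>l\<in>S. (x k * D k i) * (x l * D l i))"
    by (rule sum.swap)
  also have "\<dots> = (\<Sum>k\<in>S. \<Sum>l\<in>S. \<Sum>i\<in>{1..n}. (x k * D k i) * (x l * D l i))"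
    by (rule sum.cong[OF refl], rule sum.swap)
  also have "\<dots> = (\<Sum>k\<in>S. x k * (\<Sum>l\<in>S. gram n D k l * x l))"
    by (simp add: gram_def sum_distrib_left sum_distrib_right mult_ac)
  finally show ?thesis .
qed

lemma gram_kernel_trivial:
  assumes fin: "finite S"
    and lead: "\<And>p. p \<in> S \<Longrightarrow> p + c \<in> {1..n} \<and> D p (p + c) \<noteq> 0"
    and beyond: "\<And>p l. p \<in> S \<Longrightarrow> p + c < l \<Longrightarrow> D p l = 0"
    and x: "\<forall>k\<in>S. (\<Sum>l\<in>S. gram n D k l * x l) = 0"
  shows "\<forall>l\<in>S. x l = 0"
proof (rule ccontr)
  define v where "v i = (\<Sum>k\<in>S. x k * D k i)" for i
  have "(\<Sum>i\<in>{1..n}. (v i)\<^sup>2) = 0"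
    using x gram_quadratic_form[where x = x and S = S and n = n and D = D] by (simp add: v_def)
  then have v_eq_0: "\<forall>i\<in>{1..n}. v i = 0"
    by (simp add: sum_nonneg_eq_0_iff)
  assume "\<not> (\<forall>l\<in>S. x l = 0)"
  then have support: "{l\<in>S. x l \<noteq> 0} \<noteq> {}"
    by auto
  \<comment> \<open>The last row with a nonzero coefficient is the only one reaching column q + c.\<close>
  define q where "q = Max {l\<in>S. x l \<noteq> 0}"
  have q: "q \<in> S" "x q \<noteq> 0"
    using Max_in[OF _ support] fin by (auto simp: q_def)
  have q_max: "l \<le> q" if "l \<in> S" "x l \<noteq> 0" for l
    using that fin by (simp add: q_def)
  have "v (q + c) = (\<Sum>k\<in>S. if k = q then x q * D q (q + c) else 0)"
    unfolding v_def
  proof (rule sum.cong[OF refl])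
    fix k
    assume k: "k \<in> S"
    show "x k * D k (q + c) = (if k = q then x q * D q (q + c) else 0)"
    proof (cases "k = q \<or> x k = 0")
      case False
      then have "k < q"
        using q_max[OF k] by fastforce
      then show ?thesis
        using beyond[OF k] False by simp
    qed auto
  qed
  also have "\<dots> = x q * D q (q + c)"
    using fin q(1) by simp
  finally show False
    using v_eq_0 lead[OF q(1)] q(2) by simp
qed

lemma set_inverse_gram_factor_mult_transpose:
  assumes fin: "finite S" and inv: "set_inverse S (gram n D) H" and k: "k \<in> S" and k': "k' \<in> S"
  shows "(\<Sum>i\<in>{1..n}. (\<Sum>p\<in>S. H k p * D p i) * (\<Sum>q\<in>S. H k' q * D q i)) = H k k'"
proof -
  have "(\<Sum>i\<in>{1..n}. (\<Sum>p\<in>S. H k p * D p i) * (\<Sum>q\<in>S. H k' q * D q i))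
      = (\<Sum>i\<in>{1..n}. \<Sum>p\<in>S. \<Sum>q\<in>S. (H k p * H k' q) * (D p i * D q i))"
    by (simp add: sum_product mult_ac)
  also have "\<dots> = (\<Sum>p\<in>S. \<Sum>i\<in>{1..n}. \<Sum>q\<in>S. (H k p * H k' q) * (D p i * D q i))"
    by (rule sum.swap)
  also have "\<dots> = (\<Sum>p\<in>S. \<Sum>q\<in>S. \<Sum>i\<in>{1..n}. (H k p * H k' q) * (D p i * D q i))"
    by (rule sum.cong[OF refl], rule sum.swap)
  also have "\<dots> = (\<Sum>p\<in>S. H k p * (\<Sum>q\<in>S. H k' q * gram n D q p))"
    by (simp add: gram_def sum_distrib_left mult_ac)
  also have "\<dots> = (\<Sum>p\<in>S. if p = k' then H k p else 0)"
    using inv k' by (intro sum.cong) (auto simp: set_inverse_def)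
  also have "\<dots> = H k k'"
    using fin k' by simp
  finally show ?thesis .
qed

lemma sum_rows_mult_eq_0:
  fixes D H :: "nat \<Rightarrow> nat \<Rightarrow> real"
  assumes "\<forall>p\<in>S. (\<Sum>l\<in>{1..n}. D p l * f l) = 0"
  shows "(\<Sum>i\<in>{1..n}. (\<Sum>p\<in>S. H k p * D p i) * f i) = 0"
proof -
  have "(\<Sum>i\<in>{1..n}. (\<Sum>p\<in>S. H k p * D p i) * f i) = (\<Sum>i\<in>{1..n}. \<Sum>p\<in>S. H k p * (D p i * f i))"
    by (simp add: sum_distrib_right mult.assoc)
  also have "\<dots> = (\<Sum>p\<in>S. \<Sum>i\<in>{1..n}. H k p * (D p i * f i))"
    by (rule sum.swap)
  also have "\<dots> = (\<Sum>p\<in>S. H k p * (\<Sum>i\<in>{1..n}. D p i * f i))"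
    by (simp add: sum_distrib_left)
  also have "\<dots> = 0"
    using assms by simp
  finally show ?thesis .
qed

lemma r_a_plus_r_b: "r_a r + r_b r = r"
proof (cases "even r")
  case True
  then obtain q where r: "r = 2 * q"
    by blast
  have "\<lfloor>real (r + 1) / 2\<rfloor> = int q" "\<lceil>real (r + 1) / 2\<rceil> = int q + 1"
    using r by (simp_all add: floor_eq_iff ceiling_eq_iff)
  then show ?thesis
    using r by (simp add: r_a_def r_b_def)
next
  case False
  then obtain q where r: "r = 2 * q + 1"
    using oddE by blast
  then have half: "real (r + 1) / 2 = real (q + 1)"
    by simp
  show ?thesis
    unfolding r_a_def r_b_def half floor_of_nat ceiling_of_nat using r by simp
qed

locale changepoint_design =
  fixes n r J :: nat and \<tau> :: "nat \<Rightarrow> nat" and f :: "nat \<Rightarrow> real"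
  assumes order_lt_n: "r + 1 < n"
    and tau_last: "\<tau> (J + 1) = n - r - 1"
    and tau_increasing: "\<forall>j\<le>J. \<tau> j < \<tau> (j + 1)"
    and null_signal: "\<forall>i\<in>{1..n - r - 1} - Aset r J \<tau>. (\<Sum>l\<in>{1..n}. diffmat n (r + 1) i l * f l) = 0"
begin

abbreviation "m \<equiv> n - r - 1"
abbreviation "D \<equiv> diffmat n (r + 1)"
abbreviation "S \<equiv> {1..m} - Aset r J \<tau>"
abbreviation "G \<equiv> gram n D"
abbreviation "H \<equiv> Ginv n r J \<tau>"
abbreviation "M \<equiv> Mmat n r J \<tau>"

lemma tau_mono: "j \<le> j' \<Longrightarrow> j' \<le> J + 1 \<Longrightarrow> \<tau> j \<le> \<tau> j'"
proof (induction j' rule: dec_induct)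
  case (step q)
  then have "\<tau> q < \<tau> (q + 1)"
    using tau_increasing by auto
  then show ?case
    using step by simp
qed simp

lemma D_band:
  assumes "p \<in> {1..m}"
  shows "l < p \<or> p + (r + 1) < l \<Longrightarrow> D p l = 0" and "D p (p + (r + 1)) = 1"
  using diffmat_band[of p "r + 1" n] assms by auto

(* Rows of D_{-A} with equal labels lie between the same two consecutive removed blocks A_j. *)
definition block :: "nat \<Rightarrow> nat set" where
  "block k = {j\<in>{1..J}. \<tau> j + r_a r < k}"

lemma rows_apart_if_block_ne:
  assumes "k \<in> S" "l \<in> S" "block k \<noteq> block l"
  shows "k + (r + 1) < l \<or> l + (r + 1) < k"
proof -
  obtain j where j: "j \<in> {1..J}" "(\<tau> j + r_a r < k) \<noteq> (\<tau> j + r_a r < l)"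
    using assms(3) unfolding block_def by blast
  have k: "\<not> (\<tau> j - r_b r \<le> k \<and> k \<le> \<tau> j + r_a r)" and l: "\<not> (\<tau> j - r_b r \<le> l \<and> l \<le> \<tau> j + r_a r)"
    using assms(1,2) j(1) by (auto simp: Aset_def)
  have r: "r = r_a r + r_b r"
    using r_a_plus_r_b by simp
  show ?thesis
  proof (cases "\<tau> j + r_a r < l")
    case True
    then have "k + r_b r < \<tau> j"
      using j(2) k by auto
    then show ?thesis
      using True r by linarith
  next
    case False
    then have "l + r_b r < \<tau> j"
      using l by auto
    moreover have "\<tau> j + r_a r < k"
      using j(2) False by auto
    ultimately show ?thesis
      using r by linarith
  qed
qed

lemma G_block_diagonal:
  assumes "k \<in> S" "l \<in> S" "block k \<noteq> block l"
  shows "G k l = 0"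
proof -
  have apart: "G p q = 0" if p: "p \<in> S" and q: "q \<in> S" and pq: "p + (r + 1) < q" for p q
  proof (rule gram_eq_0_if_apart[where c = "r + 1"])
    show "D p i = 0" if "p + (r + 1) < i" for i
      using D_band(1) p that by simp
    show "D q i = 0" if "i < q" for i
      using D_band(1) q that by simp
  qed (rule pq)
  from rows_apart_if_block_ne[OF assms] show ?thesis
  proof
    assume "k + (r + 1) < l"
    then show ?thesis
      using apart assms(1,2) by simp
  next
    assume "l + (r + 1) < k"
    then show ?thesis
      using apart[OF assms(2,1)] by (subst gram_sym)
  qed
qed

lemma set_inverse_H: "set_inverse S G H"
  unfolding Ginv_def
proof (rule set_inverse_set_inv)
  fix x
  assume x: "\<forall>k\<in>S. (\<Sum>l\<in>S. G k l * x l) = 0"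
  show "\<forall>l\<in>S. x l = 0"
  proof (rule gram_kernel_trivial[where c = "r + 1"])
    show "finite S"
      by simp
    show "p + (r + 1) \<in> {1..n} \<and> D p (p + (r + 1)) \<noteq> 0" if "p \<in> S" for p
      using that D_band(2)[of p] order_lt_n by auto
    show "D p l = 0" if "p \<in> S" "p + (r + 1) < l" for p l
      using that D_band(1) by simp
  qed (fact x)
qed simp

lemma H_block_diagonal:
  assumes "k \<in> S" "l \<in> S" "block k \<noteq> block l"
  shows "H k l = 0"
proof (rule set_inverse_block_diagonal[where b = block, OF _ set_inverse_H])
  show "finite S"
    by simp
  show "G k' p = 0" if "k' \<in> S" "p \<in> S" "block k' \<noteq> block p" for k' p
    using that by (rule G_block_diagonal)
qed (fact assms)+

lemma M_annihilates_signal: "(\<Sum>i\<in>{1..n}. M k i * f i) = 0"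
  unfolding Mmat_def by (rule sum_rows_mult_eq_0) (use null_signal in simp)

lemma M_mult_M_transpose: "k \<in> S \<Longrightarrow> k' \<in> S \<Longrightarrow> (\<Sum>i\<in>{1..n}. M k i * M k' i) = H k k'"
  unfolding Mmat_def by (rule set_inverse_gram_factor_mult_transpose[OF _ set_inverse_H]) auto

lemma M_row_support:
  assumes "k \<in> S" "M k i \<noteq> 0"
  shows "\<exists>p\<in>S. block p = block k \<and> p \<le> i \<and> i \<le> p + (r + 1)"
proof -
  obtain p where p: "p \<in> S" "H k p * D p i \<noteq> 0"
    using assms(2) unfolding Mmat_def by (rule sum.not_neutral_contains_not_neutral)
  then have "block p = block k"
    using H_block_diagonal[OF assms(1) p(1)] by auto
  moreover have "\<not> (i < p \<or> p + (r + 1) < i)"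
    using p D_band(1)[of p i] by auto
  ultimately show ?thesis
    using p(1) by auto
qed

definition in_segment :: "nat \<Rightarrow> nat \<Rightarrow> bool" where
  "in_segment j k \<longleftrightarrow> \<tau> j + r_a r < k \<and> k < \<tau> (Suc j) - r_b r"

lemma in_segment_in_S:
  assumes j: "j \<le> J" and k: "in_segment j k"
  shows "k \<in> S"
proof -
  have bounds: "\<tau> j + r_a r < k" "k < \<tau> (Suc j) - r_b r"
    using k by (auto simp: in_segment_def)
  have "\<tau> (Suc j) \<le> m"
    using tau_mono[of "Suc j" "J + 1"] tau_last j by simp
  then have "k \<in> {1..m}"
    using bounds by auto
  moreover have "k \<notin> Aset r J \<tau>"
  proof
    assume "k \<in> Aset r J \<tau>"
    then obtain i where i: "i \<in> {1..J}" "\<tau> i - r_b r \<le> k" "k \<le> \<tau> i + r_a r"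
      by (auto simp: Aset_def)
    show False
    proof (cases "i \<le> j")
      case True
      then have "\<tau> i \<le> \<tau> j"
        using tau_mono j by simp
      then show False
        using i bounds by simp
    next
      case False
      then have "\<tau> (Suc j) - r_b r \<le> \<tau> i - r_b r"
        using tau_mono i(1) by (simp add: diff_le_mono)
      then show False
        using i bounds by linarith
    qed
  qed
  ultimately show ?thesis
    by simp
qed

lemma block_in_segment:
  assumes j: "j \<le> J" and k: "in_segment j k"
  shows "block k = {1..j}"
proof -
  have bounds: "\<tau> j + r_a r < k" "k < \<tau> (Suc j) - r_b r"
    using k by (auto simp: in_segment_def)
  have "\<tau> i + r_a r < k \<longleftrightarrow> i \<le> j" if i: "i \<in> {1..J}" for i
  proof
    assume left: "\<tau> i + r_a r < k"
    show "i \<le> j"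
    proof (rule ccontr)
      assume "\<not> i \<le> j"
      then have "\<tau> (Suc j) \<le> \<tau> i"
        using tau_mono i by simp
      moreover have "\<tau> (Suc j) - r_b r \<le> \<tau> (Suc j)"
        by simp
      ultimately show False
        using left bounds by linarith
    qed
  next
    assume "i \<le> j"
    then have "\<tau> i \<le> \<tau> j"
      using tau_mono j by simp
    then show "\<tau> i + r_a r < k"
      using bounds by simp
  qed
  then show ?thesis
    using j by (force simp: block_def)
qed

definition window :: "nat \<Rightarrow> nat set" where
  "window j = (\<Union>p\<in>{p\<in>S. block p = {1..j}}. {p..p + (r + 1)})"

lemma window_subset: "window j \<subseteq> {1..n}"
  using order_lt_n by (auto simp: window_def)

lemma window_disjoint:
  assumes "j \<noteq> j'"
  shows "window j \<inter> window j' = {}"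
proof (rule ccontr)
  assume "window j \<inter> window j' \<noteq> {}"
  then obtain i where i: "i \<in> window j" "i \<in> window j'"
    by blast
  from i(1) obtain p where "p \<in> {p\<in>S. block p = {1..j}}" "i \<in> {p..p + (r + 1)}"
    unfolding window_def by (rule UN_E)
  then have p: "p \<in> S" "block p = {1..j}" "p \<le> i" "i \<le> p + (r + 1)"
    by simp_all
  from i(2) obtain p' where "p' \<in> {p\<in>S. block p = {1..j'}}" "i \<in> {p'..p' + (r + 1)}"
    unfolding window_def by (rule UN_E)
  then have p': "p' \<in> S" "block p' = {1..j'}" "p' \<le> i" "i \<le> p' + (r + 1)"
    by simp_all
  have "card {1..j} \<noteq> card {1..j'}"
    using assms by simp
  then have "{1..j} \<noteq> {1..j'}"
    by metis
  then have "p + (r + 1) < p' \<or> p' + (r + 1) < p"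
    using rows_apart_if_block_ne[OF p(1) p'(1)] p(2) p'(2) by simp
  then show False
  proof
    assume "p + (r + 1) < p'"
    then show False
      using p(4) p'(3) by linarith
  next
    assume "p' + (r + 1) < p"
    then show False
      using p(3) p'(4) by linarith
  qed
qed

definition idx :: "real \<Rightarrow> nat" where
  "idx t = nat \<lfloor>real m * t\<rfloor>"

definition segment_scale :: "nat \<Rightarrow> real" where
  "segment_scale j = real (\<tau> (Suc j) - \<tau> j - r) powr (- (2 * real r + 1) / 2)"

definition W_coef :: "nat \<Rightarrow> real \<Rightarrow> nat \<Rightarrow> real" where
  "W_coef j t i = (if in_segment j (idx t) then segment_scale j * M (idx t) i else 0)"

lemma segment_scale_squared:
  "segment_scale j * segment_scale j = real (\<tau> (Suc j) - \<tau> j - r) powr (- (2 * real r + 1))"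
  unfolding segment_scale_def by (simp add: powr_add[symmetric])

lemma Wproc_eq_linear_form: "Wproc n r J \<tau> f \<epsilon> j t = (\<lambda>\<omega>. \<Sum>i\<in>{1..n}. W_coef j t i * \<epsilon> \<omega> i)"
proof (rule ext)
  fix \<omega>
  show "Wproc n r J \<tau> f \<epsilon> j t \<omega> = (\<Sum>i\<in>{1..n}. W_coef j t i * \<epsilon> \<omega> i)"
  proof (cases "in_segment j (idx t)")
    case True
    have "Wproc n r J \<tau> f \<epsilon> j t \<omega> = segment_scale j * (\<Sum>i\<in>{1..n}. M (idx t) i * (f i + \<epsilon> \<omega> i))"
      using True by (simp add: Wproc_def Let_def in_segment_def idx_def segment_scale_def)
    also have "\<dots> = segment_scale j * ((\<Sum>i\<in>{1..n}. M (idx t) i * f i) + (\<Sum>i\<in>{1..n}. M (idx t) i * \<epsilon> \<omega> i))"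
      by (simp add: distrib_left sum.distrib)
    also have "\<dots> = (\<Sum>i\<in>{1..n}. W_coef j t i * \<epsilon> \<omega> i)"
      using True M_annihilates_signal[of "idx t"] by (simp add: W_coef_def sum_distrib_left mult.assoc)
    finally show ?thesis .
  next
    case False
    then have "\<not> (\<tau> j + r_a r < nat \<lfloor>real m * t\<rfloor> \<and> nat \<lfloor>real m * t\<rfloor> < \<tau> (Suc j) - r_b r)"
      by (simp add: in_segment_def idx_def)
    then have "Wproc n r J \<tau> f \<epsilon> j t \<omega> = 0"
      unfolding Wproc_def Let_def by (simp only: if_False)
    then show ?thesis
      using False by (simp add: W_coef_def)
  qed
qed

lemma W_coef_eq_0_outside_window:
  assumes j: "j \<le> J" and i: "i \<notin> window j"
  shows "W_coef j t i = 0"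
proof (rule ccontr)
  assume "W_coef j t i \<noteq> 0"
  then have seg: "in_segment j (idx t)" and M_ne: "M (idx t) i \<noteq> 0"
    by (auto simp: W_coef_def split: if_splits)
  obtain p where "p \<in> S" "block p = block (idx t)" "p \<le> i" "i \<le> p + (r + 1)"
    using M_row_support[OF in_segment_in_S[OF j seg] M_ne] by blast
  then have "i \<in> window j"
    using block_in_segment[OF j seg] by (auto simp: window_def)
  with i show False ..
qed

lemma Wproc_eq_window_form:
  "j \<le> J \<Longrightarrow> Wproc n r J \<tau> f \<epsilon> j t = (\<lambda>\<omega>. \<Sum>i\<in>window j. W_coef j t i * \<epsilon> \<omega> i)"
  unfolding Wproc_eq_linear_form
  by (intro ext sum.mono_neutral_right) (use window_subset W_coef_eq_0_outside_window in auto)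

lemma Wproc_at_endpoints:
  "Wproc n r J \<tau> f \<epsilon> j (real (\<tau> j + r_a r) / real m) \<omega> = 0"
  "Wproc n r J \<tau> f \<epsilon> j (real (\<tau> (Suc j) - r_b r) / real m) \<omega> = 0"
proof -
  have "real m \<noteq> 0"
    using order_lt_n by simp
  then show "Wproc n r J \<tau> f \<epsilon> j (real (\<tau> j + r_a r) / real m) \<omega> = 0"
    and "Wproc n r J \<tau> f \<epsilon> j (real (\<tau> (Suc j) - r_b r) / real m) \<omega> = 0"
    by (simp_all add: Wproc_def Let_def nat_int_add)
qed

end

lemma (in prob_space) centered_normal_moments:
  assumes \<sigma>: "0 < \<sigma>" and X: "distributed M lborel X (normal_density 0 \<sigma>)"
  shows "integrable M X" "expectation X = 0"
    "integrable M (\<lambda>\<omega>. X \<omega> * X \<omega>)" "expectation (\<lambda>\<omega>. X \<omega> * X \<omega>) = \<sigma>\<^sup>2"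
proof -
  have "integrable lborel (\<lambda>x. normal_density 0 \<sigma> x * x)"
    using \<sigma> by (rule integrable_normal_moment_nz_1)
  moreover have "integrable lborel (\<lambda>x. normal_density 0 \<sigma> x * x) = integrable M (\<lambda>x. X x)"
    by (rule distributed_integrable[OF X]) (auto simp: normal_density_nonneg)
  ultimately show "integrable M X"
    by simp
  show mean: "expectation X = 0"
    by (rule normal_distributed_expectation[OF \<sigma> X])
  have "integrable lborel (\<lambda>x. normal_density 0 \<sigma> x * (x * x))"
    using integrable_normal_moment[where k = 2 and \<mu> = 0 and \<sigma> = \<sigma>] \<sigma> by (simp add: power2_eq_square)
  moreover have "integrable lborel (\<lambda>x. normal_density 0 \<sigma> x * (x * x)) = integrable M (\<lambda>x. X x * X x)"
    by (rule distributed_integrable[OF X]) (auto simp: normal_density_nonneg)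
  ultimately show "integrable M (\<lambda>\<omega>. X \<omega> * X \<omega>)"
    by simp
  have "variance X = \<sigma>\<^sup>2"
    by (rule normal_distributed_variance[OF \<sigma> X])
  then show "expectation (\<lambda>\<omega>. X \<omega> * X \<omega>) = \<sigma>\<^sup>2"
    using mean by (simp add: power2_eq_square)
qed

lemma measurable_restrict_linear_form:
  fixes a :: "'t \<Rightarrow> 'i \<Rightarrow> real"
  shows "(\<lambda>x. restrict (\<lambda>t. \<Sum>i\<in>A. a t i * x i) T) \<in> measurable (Pi\<^sub>M A (\<lambda>_. borel)) (Pi\<^sub>M T (\<lambda>_. borel))"
  by (auto intro!: measurable_restrict borel_measurable_sum borel_measurable_times measurable_component_singleton)

lemma (in prob_space) indep_var_linear_forms:
  fixes \<epsilon> :: "'a \<Rightarrow> 'i \<Rightarrow> real" and a :: "'t \<Rightarrow> 'i \<Rightarrow> real" and b :: "'t \<Rightarrow> 'i \<Rightarrow> real"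
  assumes ind: "indep_vars (\<lambda>_. borel) (\<lambda>i \<omega>. \<epsilon> \<omega> i) I"
    and AB: "A \<inter> B = {}" "A \<subseteq> I" "B \<subseteq> I"
  shows "indep_var
    (Pi\<^sub>M T (\<lambda>_. borel)) (\<lambda>\<omega>. restrict (\<lambda>t. \<Sum>i\<in>A. a t i * \<epsilon> \<omega> i) T)
    (Pi\<^sub>M U (\<lambda>_. borel)) (\<lambda>\<omega>. restrict (\<lambda>u. \<Sum>i\<in>B. b u i * \<epsilon> \<omega> i) U)"
proof -
  have compose: "(\<lambda>x. restrict (\<lambda>t. \<Sum>i\<in>A. a t i * x i) T) \<circ> (\<lambda>\<omega>. restrict (\<lambda>i. \<epsilon> \<omega> i) A)
      = (\<lambda>\<omega>. restrict (\<lambda>t. \<Sum>i\<in>A. a t i * \<epsilon> \<omega> i) T)"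
    "(\<lambda>x. restrict (\<lambda>u. \<Sum>i\<in>B. b u i * x i) U) \<circ> (\<lambda>\<omega>. restrict (\<lambda>i. \<epsilon> \<omega> i) B)
      = (\<lambda>\<omega>. restrict (\<lambda>u. \<Sum>i\<in>B. b u i * \<epsilon> \<omega> i) U)"
    unfolding comp_def by (intro ext restrict_ext sum.cong; simp)+
  from indep_var_compose[OF indep_var_restrict[OF ind AB]
      measurable_restrict_linear_form[where A = A and a = a and T = T]
      measurable_restrict_linear_form[where A = B and a = b and T = U]]
  show ?thesis
    unfolding compose .
qed

locale iid_normal_noise = prob_space +
  fixes \<sigma> :: real and \<epsilon> :: "'a \<Rightarrow> nat \<Rightarrow> real" and I :: "nat set"
  assumes finite_index: "finite I"
    and sigma_pos: "0 < \<sigma>"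
    and noise_normal: "\<And>i. i \<in> I \<Longrightarrow> distributed M lborel (\<lambda>\<omega>. \<epsilon> \<omega> i) (normal_density 0 \<sigma>)"
    and noise_indep: "indep_vars (\<lambda>_. borel) (\<lambda>i \<omega>. \<epsilon> \<omega> i) I"
begin

lemma noise_measurable: "i \<in> I \<Longrightarrow> (\<lambda>\<omega>. \<epsilon> \<omega> i) \<in> borel_measurable M"
  using noise_indep by (auto simp: indep_vars_def)

lemma noise_product:
  assumes i: "i \<in> I" and l: "l \<in> I"
  shows "integrable M (\<lambda>\<omega>. \<epsilon> \<omega> i * \<epsilon> \<omega> l)"
    and "expectation (\<lambda>\<omega>. \<epsilon> \<omega> i * \<epsilon> \<omega> l) = (if i = l then \<sigma>\<^sup>2 else 0)"
proof -
  note moments_i = centered_normal_moments[OF sigma_pos noise_normal[OF i]]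
  note moments_l = centered_normal_moments[OF sigma_pos noise_normal[OF l]]
  have "integrable M (\<lambda>\<omega>. \<epsilon> \<omega> i * \<epsilon> \<omega> l)
      \<and> expectation (\<lambda>\<omega>. \<epsilon> \<omega> i * \<epsilon> \<omega> l) = (if i = l then \<sigma>\<^sup>2 else 0)"
  proof (cases "i = l")
    case True
    then show ?thesis
      using moments_i by simp
  next
    case False
    have "indep_var borel ((\<lambda>g. g i) \<circ> (\<lambda>\<omega>. restrict (\<lambda>i. \<epsilon> \<omega> i) {i}))
        borel ((\<lambda>g. g l) \<circ> (\<lambda>\<omega>. restrict (\<lambda>i. \<epsilon> \<omega> i) {l}))"
      using False i l by (intro indep_var_compose[OF indep_var_restrict[OF noise_indep]]) auto
    then have indep: "indep_var borel (\<lambda>\<omega>. \<epsilon> \<omega> i) borel (\<lambda>\<omega>. \<epsilon> \<omega> l)"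
      by (simp add: comp_def)
    show ?thesis
      using indep_var_lebesgue_integral[OF indep] indep_var_integrable[OF indep]
        moments_i moments_l False by simp
  qed
  then show "integrable M (\<lambda>\<omega>. \<epsilon> \<omega> i * \<epsilon> \<omega> l)"
    and "expectation (\<lambda>\<omega>. \<epsilon> \<omega> i * \<epsilon> \<omega> l) = (if i = l then \<sigma>\<^sup>2 else 0)"
    by auto
qed

lemma linear_form_measurable: "(\<lambda>\<omega>. \<Sum>i\<in>I. a i * \<epsilon> \<omega> i) \<in> borel_measurable M"
  using noise_measurable by (intro borel_measurable_sum borel_measurable_times) auto

lemma linear_form_expectation: "expectation (\<lambda>\<omega>. \<Sum>i\<in>I. a i * \<epsilon> \<omega> i) = 0"
proof -
  have "integrable M (\<lambda>\<omega>. \<epsilon> \<omega> i)" "expectation (\<lambda>\<omega>. \<epsilon> \<omega> i) = 0" if "i \<in> I" for i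
    using centered_normal_moments[OF sigma_pos noise_normal[OF that]] by auto
  then show ?thesis
    by (simp add: integral_sum)
qed

lemma linear_form_covariance:
  "expectation (\<lambda>\<omega>. (\<Sum>i\<in>I. a i * \<epsilon> \<omega> i) * (\<Sum>l\<in>I. b l * \<epsilon> \<omega> l)) = \<sigma>\<^sup>2 * (\<Sum>i\<in>I. a i * b i)"
proof -
  have "expectation (\<lambda>\<omega>. (\<Sum>i\<in>I. a i * \<epsilon> \<omega> i) * (\<Sum>l\<in>I. b l * \<epsilon> \<omega> l))
      = expectation (\<lambda>\<omega>. \<Sum>i\<in>I. \<Sum>l\<in>I. (a i * b l) * (\<epsilon> \<omega> i * \<epsilon> \<omega> l))"
    by (simp add: sum_product mult_ac)
  also have "\<dots> = (\<Sum>i\<in>I. \<Sum>l\<in>I. (a i * b l) * expectation (\<lambda>\<omega>. \<epsilon> \<omega> i * \<epsilon> \<omega> l))"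
    using noise_product by (simp add: integral_sum)
  also have "\<dots> = (\<Sum>i\<in>I. \<Sum>l\<in>I. if l = i then a i * b l * \<sigma>\<^sup>2 else 0)"
    using noise_product by (intro sum.cong) auto
  also have "\<dots> = \<sigma>\<^sup>2 * (\<Sum>i\<in>I. a i * b i)"
    using finite_index by (simp add: sum_distrib_left mult_ac)
  finally show ?thesis .
qed

lemma linear_form_gaussian: "gaussian_rv M (\<lambda>\<omega>. \<Sum>i\<in>I. a i * \<epsilon> \<omega> i)"
proof (cases "\<forall>i\<in>I. a i = 0")
  case True
  then show ?thesis
    by (simp add: gaussian_rv_def)
next
  case False
  \<comment> \<open>Terms with a zero coefficient are dropped: a point mass is not a normal density.\<close>
  define I' where "I' = {i\<in>I. a i \<noteq> 0}"
  have I': "I' \<noteq> {}" "finite I'" "I' \<subseteq> I"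
    using False finite_index by (auto simp: I'_def)
  have sum_eq: "(\<lambda>\<omega>. \<Sum>i\<in>I. a i * \<epsilon> \<omega> i) = (\<lambda>\<omega>. \<Sum>i\<in>I'. a i * \<epsilon> \<omega> i)"
    by (rule ext, rule sum.mono_neutral_cong_right) (auto simp: I'_def finite_index)
  have normal: "distributed M lborel (\<lambda>\<omega>. a i * \<epsilon> \<omega> i) (normal_density 0 (\<bar>a i\<bar> * \<sigma>))" if "i \<in> I'" for i
    using normal_density_affine[of "\<lambda>\<omega>. \<epsilon> \<omega> i" 0 \<sigma> "a i" 0] noise_normal that sigma_pos
    by (auto simp: I'_def)
  have indep: "indep_vars (\<lambda>_. borel) (\<lambda>i \<omega>. a i * \<epsilon> \<omega> i) I'"
    using indep_vars_compose2[OF indep_vars_subset[OF noise_indep I'(3)], of "\<lambda>i x. a i * x" "\<lambda>_. borel"]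
    by auto
  have "distributed M lborel (\<lambda>\<omega>. \<Sum>i\<in>I'. a i * \<epsilon> \<omega> i)
      (normal_density (\<Sum>i\<in>I'. 0) (sqrt (\<Sum>i\<in>I'. (\<bar>a i\<bar> * \<sigma>)\<^sup>2)))"
    by (rule sum_indep_normal[OF I'(2,1) indep]) (use sigma_pos normal in \<open>auto simp: I'_def\<close>)
  moreover have "0 < sqrt (\<Sum>i\<in>I'. (\<bar>a i\<bar> * \<sigma>)\<^sup>2)"
    using sigma_pos I' by (auto intro!: sum_pos simp: I'_def)
  ultimately show ?thesis
    unfolding gaussian_rv_def sum_eq by auto
qed

end

locale changepoint_model =
  changepoint_design n r J \<tau> f + iid_normal_noise P \<sigma> \<epsilon> "{1..n}"
  for n r J \<tau> f and P :: "'a measure" and \<sigma> \<epsilon>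
begin

lemma W_gaussian_process: "gaussian_process P T (Wproc n r J \<tau> f \<epsilon> j)"
  unfolding gaussian_process_def
proof (intro conjI ballI allI impI)
  fix t
  show "Wproc n r J \<tau> f \<epsilon> j t \<in> borel_measurable P"
    unfolding Wproc_eq_linear_form by (rule linear_form_measurable)
next
  fix T' :: "real set" and c :: "real \<Rightarrow> real"
  have "(\<Sum>t\<in>T'. c t * Wproc n r J \<tau> f \<epsilon> j t \<omega>) = (\<Sum>i\<in>{1..n}. (\<Sum>t\<in>T'. c t * W_coef j t i) * \<epsilon> \<omega> i)"
    for \<omega>
  proof -
    have "(\<Sum>t\<in>T'. c t * Wproc n r J \<tau> f \<epsilon> j t \<omega>) = (\<Sum>t\<in>T'. \<Sum>i\<in>{1..n}. c t * W_coef j t i * \<epsilon> \<omega> i)"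
      by (simp add: Wproc_eq_linear_form sum_distrib_left mult.assoc)
    also have "\<dots> = (\<Sum>i\<in>{1..n}. \<Sum>t\<in>T'. c t * W_coef j t i * \<epsilon> \<omega> i)"
      by (rule sum.swap)
    also have "\<dots> = (\<Sum>i\<in>{1..n}. (\<Sum>t\<in>T'. c t * W_coef j t i) * \<epsilon> \<omega> i)"
      by (simp add: sum_distrib_right)
    finally show ?thesis .
  qed
  then show "gaussian_rv P (\<lambda>\<omega>. \<Sum>t\<in>T'. c t * Wproc n r J \<tau> f \<epsilon> j t \<omega>)"
    using linear_form_gaussian by simp
qed

lemma W_expectation: "expectation (Wproc n r J \<tau> f \<epsilon> j t) = 0"
  unfolding Wproc_eq_linear_form by (rule linear_form_expectation)

lemma W_covariance:
  assumes j: "j \<le> J" and t: "in_segment j (idx t)" and t': "in_segment j (idx t')"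
  shows "expectation (\<lambda>\<omega>. (Wproc n r J \<tau> f \<epsilon> j t \<omega> - expectation (Wproc n r J \<tau> f \<epsilon> j t))
                          * (Wproc n r J \<tau> f \<epsilon> j t' \<omega> - expectation (Wproc n r J \<tau> f \<epsilon> j t')))
    = \<sigma>\<^sup>2 * real (\<tau> (Suc j) - \<tau> j - r) powr (- (2 * real r + 1)) * H (idx t) (idx t')"
proof -
  have "expectation (\<lambda>\<omega>. (Wproc n r J \<tau> f \<epsilon> j t \<omega> - expectation (Wproc n r J \<tau> f \<epsilon> j t))
                          * (Wproc n r J \<tau> f \<epsilon> j t' \<omega> - expectation (Wproc n r J \<tau> f \<epsilon> j t')))
      = \<sigma>\<^sup>2 * (\<Sum>i\<in>{1..n}. W_coef j t i * W_coef j t' i)"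
    unfolding W_expectation diff_zero unfolding Wproc_eq_linear_form by (rule linear_form_covariance)
  also have "\<dots> = \<sigma>\<^sup>2 * (segment_scale j * segment_scale j * (\<Sum>i\<in>{1..n}. M (idx t) i * M (idx t') i))"
    using t t' by (simp add: W_coef_def sum_distrib_left mult_ac)
  also have "\<dots> = \<sigma>\<^sup>2 * real (\<tau> (Suc j) - \<tau> j - r) powr (- (2 * real r + 1)) * H (idx t) (idx t')"
    using M_mult_M_transpose[OF in_segment_in_S[OF j t] in_segment_in_S[OF j t']]
    by (simp add: segment_scale_squared)
  finally show ?thesis .
qed

lemma W_indep:
  assumes "j \<le> J" "j' \<le> J" "j \<noteq> j'"
  shows "indep_var
    (Pi\<^sub>M T (\<lambda>_. borel)) (\<lambda>\<omega>. restrict (\<lambda>t. Wproc n r J \<tau> f \<epsilon> j t \<omega>) T)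
    (Pi\<^sub>M T' (\<lambda>_. borel)) (\<lambda>\<omega>. restrict (\<lambda>t. Wproc n r J \<tau> f \<epsilon> j' t \<omega>) T')"
  unfolding Wproc_eq_window_form[OF assms(1)] Wproc_eq_window_form[OF assms(2)]
  by (rule indep_var_linear_forms[OF noise_indep window_disjoint[OF assms(3)] window_subset window_subset])

end

theorem theorem1:
  fixes P :: "'a measure" and n r J :: nat and \<tau> :: "nat \<Rightarrow> nat"
    and f :: "nat \<Rightarrow> real" and \<epsilon> :: "'a \<Rightarrow> nat \<Rightarrow> real" and \<sigma> :: real
  assumes "prob_space P"
    and "n > r + 1"
    and "\<tau> 0 = 0" and "\<tau> (J + 1) = n - r - 1"
    and "\<forall>j\<le>J. \<tau> j < \<tau> (j + 1)"
    and "\<tau> 1 \<ge> r_b r + 1" and "\<tau> J + r_a r \<le> n - r - 1"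
    and "\<forall>j\<le>J. \<tau> (j + 1) - \<tau> j \<ge> r + 1"
    and "\<forall>i\<in>{1..n - r - 1} - Aset r J \<tau>. (\<Sum>l\<in>{1..n}. diffmat n (r + 1) i l * f l) = 0"
    and "\<sigma> > 0"
    and "\<forall>i\<in>{1..n}. distributed P lborel (\<lambda>\<omega>. \<epsilon> \<omega> i) (normal_density 0 \<sigma>)"
    and "prob_space.indep_vars P (\<lambda>_. borel) (\<lambda>i \<omega>. \<epsilon> \<omega> i) {1..n}"
  shows
    "(\<forall>j\<le>J.
        gaussian_process P (Ival n r \<tau> j) (Wproc n r J \<tau> f \<epsilon> j)
      \<and> (\<forall>t\<in>Ival n r \<tau> j. integral\<^sup>L P (Wproc n r J \<tau> f \<epsilon> j t) = 0)
      \<and> (\<forall>\<omega>. Wproc n r J \<tau> f \<epsilon> j (real (\<tau> j + r_a r) / real (n - r - 1)) \<omega> = 0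
              \<and> Wproc n r J \<tau> f \<epsilon> j (real (\<tau> (j + 1) - r_b r) / real (n - r - 1)) \<omega> = 0)
      \<and> (\<forall>t\<in>Ival n r \<tau> j. \<forall>t'\<in>Ival n r \<tau> j.
           (let k = nat \<lfloor>real (n - r - 1) * t\<rfloor>; k' = nat \<lfloor>real (n - r - 1) * t'\<rfloor> in
            \<tau> j + r_a r < k \<and> k < \<tau> (j + 1) - r_b r \<and>
            \<tau> j + r_a r < k' \<and> k' < \<tau> (j + 1) - r_b r \<longrightarrow>
            integral\<^sup>L P (\<lambda>\<omega>. (Wproc n r J \<tau> f \<epsilon> j t \<omega> - integral\<^sup>L P (Wproc n r J \<tau> f \<epsilon> j t))
                             * (Wproc n r J \<tau> f \<epsilon> j t' \<omega> - integral\<^sup>L P (Wproc n r J \<tau> f \<epsilon> j t')))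
            = \<sigma>\<^sup>2 * real (\<tau> (j + 1) - \<tau> j - r) powr (- (2 * real r + 1))
                 * Ginv n r J \<tau> k k')))
     \<and> (\<forall>j\<le>J. \<forall>j'\<le>J. j \<noteq> j' \<longrightarrow>
          prob_space.indep_var P
            (Pi\<^sub>M (Ival n r \<tau> j) (\<lambda>_. borel)) (\<lambda>\<omega>. restrict (\<lambda>t. Wproc n r J \<tau> f \<epsilon> j t \<omega>) (Ival n r \<tau> j))
            (Pi\<^sub>M (Ival n r \<tau> j') (\<lambda>_. borel)) (\<lambda>\<omega>. restrict (\<lambda>t. Wproc n r J \<tau> f \<epsilon> j' t \<omega>) (Ival n r \<tau> j')))"
proof -
  \<comment> \<open>The hypotheses on \<tau> 0, \<tau> 1, \<tau> J and the minimal spacing only make the blocks A_j disjoint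
      subsets of {1..m} and the segments nonempty; the conclusion holds without them.\<close>
  interpret changepoint_model n r J \<tau> f P \<sigma> \<epsilon>
  proof (intro changepoint_model.intro changepoint_design.intro iid_normal_noise.intro
      iid_normal_noise_axioms.intro)
    show "distributed P lborel (\<lambda>\<omega>. \<epsilon> \<omega> i) (normal_density 0 \<sigma>)" if "i \<in> {1..n}" for i
      using assms(11) that by blast
  qed (fact assms | simp)+
  show ?thesis
    unfolding Let_def
    by (intro conjI allI impI ballI;
        rule W_gaussian_process W_expectation Wproc_at_endpoints(1)
          Wproc_at_endpoints(2)[unfolded Suc_eq_plus1] W_indep
          W_covariance[unfolded in_segment_def idx_def Suc_eq_plus1];
        simp)
qed

end
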